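(* Let $E/\mathbb{Q}$ be given by the model $y^2=x^3+Ax+B$ ($A,B\in\mathbb{Z}$) described in the context and $X=\max\{|A|^3,|B|^2\}$. Let $P,Q\in E(\mathbb{Q})$ satisfy $X^{1/6}\le x(P)<x(Q)$ and $x(P)=x_1/s$, $x(Q)=x_2/s$ with $x_1,x_2\in\mathbb{Z}$ and $s$ a positive integer. Then $h(P+Q)\le h(P)+2h(Q)+3h(s)+2.9$.
   Context: The model is obtained from a global minimal Weierstrass equation of $E$ by the substitution $x\mapsto \frac{1}{36}(x-3b_2)$, $y\mapsto \frac12(\frac{y}{108}-\frac{a_1}{36}(x-3b_2)-a_3)$. $h$ is the absolute logarithmic Weil height (so $h(s)=\log s$) and $h(P)=h(x(P))$. *)

theory Defs
  imports "HOL-Analysis.Analysis"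
begin

type_synonym wcoef = "rat \<times> rat \<times> rat \<times> rat \<times> rat"

fun w_b2 :: "wcoef \<Rightarrow> rat" where
  "w_b2 (a1,a2,a3,a4,a6) = a1^2 + 4 * a2"
fun w_b4 :: "wcoef \<Rightarrow> rat" where
  "w_b4 (a1,a2,a3,a4,a6) = 2 * a4 + a1 * a3"
fun w_b6 :: "wcoef \<Rightarrow> rat" where
  "w_b6 (a1,a2,a3,a4,a6) = a3^2 + 4 * a6"
fun w_b8 :: "wcoef \<Rightarrow> rat" where
  "w_b8 (a1,a2,a3,a4,a6) = a1^2 * a6 + 4 * a2 * a6 - a1 * a3 * a4 + a2 * a3^2 - a4^2"

definition w_c4 :: "wcoef \<Rightarrow> rat" where
  "w_c4 a = w_b2 a ^ 2 - 24 * w_b4 a"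
definition w_c6 :: "wcoef \<Rightarrow> rat" where
  "w_c6 a = - (w_b2 a ^ 3) + 36 * w_b2 a * w_b4 a - 216 * w_b6 a"
definition w_disc :: "wcoef \<Rightarrow> rat" where
  "w_disc a = - (w_b2 a ^ 2) * w_b8 a - 8 * w_b4 a ^ 3 - 27 * w_b6 a ^ 2
               + 9 * w_b2 a * w_b4 a * w_b6 a"

definition w_integral :: "wcoef \<Rightarrow> bool" where
  "w_integral a \<longleftrightarrow> (case a of (a1,a2,a3,a4,a6) \<Rightarrow>
      a1 \<in> \<int> \<and> a2 \<in> \<int> \<and> a3 \<in> \<int> \<and> a4 \<in> \<int> \<and> a6 \<in> \<int>)"

text \<open>Coefficients after the change of variables
  x = u^2 x' + r,  y = u^3 y' + s u^2 x' + t  (u \<noteq> 0).\<close>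
fun w_change :: "rat \<Rightarrow> rat \<Rightarrow> rat \<Rightarrow> rat \<Rightarrow> wcoef \<Rightarrow> wcoef" where
  "w_change uu rr ss tt (a1,a2,a3,a4,a6) =
     ((a1 + 2 * ss) / uu,
      (a2 - ss * a1 + 3 * rr - ss^2) / uu^2,
      (a3 + rr * a1 + 2 * tt) / uu^3,
      (a4 - ss * a3 + 2 * rr * a2 - (tt + rr * ss) * a1 + 3 * rr^2 - 2 * ss * tt) / uu^4,
      (a6 + rr * a4 + rr^2 * a2 + rr^3 - tt * a3 - tt^2 - rr * tt * a1) / uu^6)"

definition global_minimal :: "wcoef \<Rightarrow> bool" where
  "global_minimal a \<longleftrightarrow> w_integral a \<and> w_disc a \<noteq> 0 \<and>
     (\<forall>u r s t. u \<noteq> 0 \<longrightarrow> w_integral (w_change u r s t a) \<longrightarrow>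
        \<bar>w_disc a\<bar> \<le> \<bar>w_disc (w_change u r s t a)\<bar>)"

text \<open>Rational points of y^2 = x^3 + A x + B; None is the point at infinity.\<close>
type_synonym point = "(rat \<times> rat) option"

definition on_curve :: "int \<Rightarrow> int \<Rightarrow> point \<Rightarrow> bool" where
  "on_curve A B P \<longleftrightarrow> (case P of None \<Rightarrow> True
     | Some (x, y) \<Rightarrow> y^2 = x^3 + of_int A * x + of_int B)"

definition ec_add :: "int \<Rightarrow> int \<Rightarrow> point \<Rightarrow> point \<Rightarrow> point" where
  "ec_add A B P Q = (case P of None \<Rightarrow> Q | Some (x1, y1) \<Rightarrow>
     (case Q of None \<Rightarrow> P | Some (x2, y2) \<Rightarrow>
       (if x1 = x2 \<and> y1 = - y2 then None
        else let l = (if x1 = x2 then (3 * x1^2 + of_int A) / (2 * y1)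
                      else (y2 - y1) / (x2 - x1));
                 x3 = l^2 - x1 - x2
             in Some (x3, l * (x1 - x3) - y1))))"

definition hgt :: "rat \<Rightarrow> real" where
  "hgt q = (case quotient_of q of (n, d) \<Rightarrow> ln (real_of_int (max \<bar>n\<bar> \<bar>d\<bar>)))"

definition xcoord :: "point \<Rightarrow> rat" where
  "xcoord P = (case P of None \<Rightarrow> 0 | Some (x, y) \<Rightarrow> x)"

definition hpt :: "point \<Rightarrow> real" where
  "hpt P = hgt (xcoord P)"

end

theory Submission
  imports Defs "HOL-Computational_Algebra.Polynomial"
begin

text \<open>Write x(P) = x1/s, x(Q) = x2/s and F(x) = x^3 + A x s^2 + B s^3, so that F(xi) = s^3 y(Pi)^2.
  The chord formula gives x(P+Q) = N / (s (x2 - x1)^2) with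
  N = (x1 + x2)(x1 x2 + A s^2) + 2 B s^3 - 2 M, where M = s^3 y(P) y(Q) is an integer because
  M^2 = F(x1) F(x2). The hypothesis x(P) \<ge> X^(1/6) means |A| s^2 \<le> x1^2 and |B| s^3 \<le> x1^3,
  hence |F(xi)| \<le> 3 xi^3, |M| \<le> 3 x1 x2^2 and |N| \<le> 12 x1 x2^2, while the denominator is at
  most s x2^2. As max(|xi|, s) \<le> s exp(h(Pi)), this gives the bound with ln 12 < 2.9.\<close>

lemma power_in_Ints_imp_in_Ints:
  fixes r :: "'a :: field_char_0"
  assumes "r \<in> \<rat>" and "r ^ n \<in> \<int>" and "n > 0"
  shows "r \<in> \<int>"
proof (rule rational_algebraic_int_is_int)
  show "algebraic_int r"
    by (rule algebraic_int_root[OF int_imp_algebraic_int[OF assms(2)], of "monom 1 n"])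
       (use assms(3) in \<open>auto simp: poly_monom degree_monom_eq\<close>)
qed fact

lemma hgt_of_int_div:
  fixes N D :: int
  assumes "D > 0"
  shows "hgt (of_int N / of_int D) = ln (max \<bar>N\<bar> D) - ln (gcd N D)"
proof -
  define g where "g = gcd N D"
  have g: "g > 0" using assms by (simp add: g_def)
  have N: "N = g * (N div g)" and D: "D = g * (D div g)" by (simp_all add: g_def)
  have Dg: "D div g > 0" using D g assms by (metis zero_less_mult_pos)
  have "quotient_of (of_int N / of_int D) = (N div g, D div g)"
    using assms by (simp add: g_def quotient_of_Fract normalize_def Let_def flip: Fract_of_int_quotient)
  then have hgt_eq: "hgt (of_int N / of_int D) = ln (max (\<bar>N div g\<bar>) (D div g))"
    using Dg by (simp add: hgt_def)
  from arg_cong[of _ _ abs, OF N] have "\<bar>N\<bar> = g * \<bar>N div g\<bar>"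
    using g by (simp only: abs_mult abs_of_pos)
  then have "max \<bar>N\<bar> D = g * max (\<bar>N div g\<bar>) (D div g)"
    using g D by (simp add: max_mult_distrib_left)
  then show ?thesis unfolding g_def[symmetric] using g Dg by (simp add: hgt_eq ln_mult)
qed

lemma hgt_of_int_div_le:
  fixes N D :: int
  assumes "D > 0"
  shows "hgt (of_int N / of_int D) \<le> ln (max \<bar>N\<bar> D)"
proof -
  have "gcd N D \<ge> 1" using assms by (simp add: int_one_le_iff_zero_less)
  then show ?thesis using assms by (simp add: hgt_of_int_div)
qed

lemma ln_max_le_hgt_of_int_div:
  fixes N D :: int
  assumes "D > 0"
  shows "ln (max \<bar>N\<bar> D) \<le> hgt (of_int N / of_int D) + ln D"
proof -
  have "gcd N D \<le> D" using assms by (simp add: zdvd_imp_le)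
  moreover have "gcd N D > 0" using assms by simp
  ultimately show ?thesis using assms by (simp add: hgt_of_int_div)
qed

lemma xcoord_ec_add_of_neq:
  assumes "u \<noteq> v"
  shows "xcoord (ec_add A B (Some (u, y1)) (Some (v, y2))) = ((y2 - y1) / (v - u)) ^ 2 - u - v"
  using assms by (simp add: ec_add_def xcoord_def Let_def)

lemma chord_xcoord_eq:
  fixes u v y1 y2 A B :: "'a::field"
  assumes "y1 ^ 2 = u ^ 3 + A * u + B" and "y2 ^ 2 = v ^ 3 + A * v + B" and "u \<noteq> v"
  shows "((y2 - y1) / (v - u)) ^ 2 - u - v
           = ((u + v) * (u * v + A) + 2 * B - 2 * y1 * y2) / (v - u) ^ 2"
proof -
  have d: "(v - u) ^ 2 \<noteq> 0" using assms(3) by simp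
  have "((y2 - y1) / (v - u)) ^ 2 - u - v
      = (y2 - y1) ^ 2 / (v - u) ^ 2 - (u + v) * (v - u) ^ 2 / (v - u) ^ 2"
    using d by (simp add: power_divide)
  also have "\<dots> = ((y2 - y1) ^ 2 - (u + v) * (v - u) ^ 2) / (v - u) ^ 2"
    by (rule diff_divide_distrib[symmetric])
  also have "(y2 - y1) ^ 2 - (u + v) * (v - u) ^ 2 = (u + v) * (u * v + A) + 2 * B - 2 * y1 * y2"
    using assms(1,2) by (simp add: power2_diff power3_eq_cube power2_eq_square algebra_simps)
  finally show ?thesis .
qed

lemma of_int_scaled_cubic_eq:
  fixes x s A B :: int and y :: rat
  assumes "s \<noteq> 0" and "y ^ 2 = (of_int x / of_int s) ^ 3 + of_int A * (of_int x / of_int s) + of_int B"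
  shows "of_int (x ^ 3 + A * x * s ^ 2 + B * s ^ 3) = of_int s ^ 3 * y ^ 2"
  using assms by (simp add: field_simps power3_eq_cube power2_eq_square)

lemma xcoord_ec_add_of_int_div:
  fixes x1 x2 s A B :: int and y1 y2 :: rat
  defines "u \<equiv> of_int x1 / of_int s" and "v \<equiv> of_int x2 / of_int s"
  assumes s: "s \<noteq> 0" and x12: "x1 \<noteq> x2"
    and P: "on_curve A B (Some (u, y1))" and Q: "on_curve A B (Some (v, y2))"
  obtains M :: int
  where "M ^ 2 = (x1 ^ 3 + A * x1 * s ^ 2 + B * s ^ 3) * (x2 ^ 3 + A * x2 * s ^ 2 + B * s ^ 3)"
    and "xcoord (ec_add A B (Some (u, y1)) (Some (v, y2)))
           = of_int ((x1 + x2) * (x1 * x2 + A * s ^ 2) + 2 * B * s ^ 3 - 2 * M)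
             / of_int (s * (x2 - x1) ^ 2)"
proof -
  define S :: rat where "S = of_int s"
  have S: "S \<noteq> 0" using s by (simp add: S_def)
  have P': "y1 ^ 2 = u ^ 3 + of_int A * u + of_int B" and Q': "y2 ^ 2 = v ^ 3 + of_int A * v + of_int B"
    using P Q by (simp_all add: on_curve_def)
  have sq: "(S ^ 3 * y1 * y2) ^ 2
      = of_int ((x1 ^ 3 + A * x1 * s ^ 2 + B * s ^ 3) * (x2 ^ 3 + A * x2 * s ^ 2 + B * s ^ 3))"
    using of_int_scaled_cubic_eq[OF s P'[unfolded u_def]] of_int_scaled_cubic_eq[OF s Q'[unfolded v_def]]
    by (simp add: S_def power_mult_distrib power2_eq_square)
  have "S ^ 3 * y1 * y2 \<in> \<int>"
    by (rule power_in_Ints_imp_in_Ints[of _ 2]) (simp_all add: sq Rats_def)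
  then obtain M where M: "S ^ 3 * y1 * y2 = of_int M" by (elim Ints_cases)
  show thesis
  proof
    show "M ^ 2 = (x1 ^ 3 + A * x1 * s ^ 2 + B * s ^ 3) * (x2 ^ 3 + A * x2 * s ^ 2 + B * s ^ 3)"
      using sq unfolding M of_int_power[symmetric] of_int_eq_iff .
    have "u \<noteq> v" using s x12 by (simp add: u_def v_def)
    have "2 * y1 * y2 = 2 * of_int M / S ^ 3" using M S by (simp add: field_simps)
    then have num: "(u + v) * (u * v + of_int A) + 2 * of_int B - 2 * y1 * y2
        = of_int ((x1 + x2) * (x1 * x2 + A * s ^ 2) + 2 * B * s ^ 3 - 2 * M) / S ^ 3"
      using S by (simp add: u_def v_def S_def field_simps power2_eq_square power3_eq_cube)
    have den: "(v - u) ^ 2 = of_int ((x2 - x1) ^ 2) / S ^ 2"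
      by (simp add: u_def v_def S_def power_divide flip: diff_divide_distrib)
    have frac: "(a / S ^ 3) / (b / S ^ 2) = a / (S * b)" if "b \<noteq> 0" for a b
      using S that by (simp add: field_simps power2_eq_square power3_eq_cube)
    have "xcoord (ec_add A B (Some (u, y1)) (Some (v, y2))) = ((y2 - y1) / (v - u)) ^ 2 - u - v"
      using \<open>u \<noteq> v\<close> by (rule xcoord_ec_add_of_neq)
    also have "\<dots> = ((u + v) * (u * v + of_int A) + 2 * of_int B - 2 * y1 * y2) / (v - u) ^ 2"
      using P' Q' \<open>u \<noteq> v\<close> by (rule chord_xcoord_eq)
    also have "\<dots> = of_int ((x1 + x2) * (x1 * x2 + A * s ^ 2) + 2 * B * s ^ 3 - 2 * M)
        / (S * of_int ((x2 - x1) ^ 2))"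
      unfolding num den using x12 by (intro frac) simp
    also have "\<dots> = of_int ((x1 + x2) * (x1 * x2 + A * s ^ 2) + 2 * B * s ^ 3 - 2 * M)
        / of_int (s * (x2 - x1) ^ 2)"
      by (simp only: S_def of_int_mult)
    finally show "xcoord (ec_add A B (Some (u, y1)) (Some (v, y2)))
        = of_int ((x1 + x2) * (x1 * x2 + A * s ^ 2) + 2 * B * s ^ 3 - 2 * M)
          / of_int (s * (x2 - x1) ^ 2)" .
  qed
qed

lemma abs_le_power_of_root_6_max_le:
  fixes a b r :: real
  assumes "root 6 (max (\<bar>a\<bar> ^ 3) (b ^ 2)) \<le> r"
  shows "0 \<le> r" and "\<bar>a\<bar> \<le> r ^ 2" and "\<bar>b\<bar> \<le> r ^ 3"
proof -
  define X where "X = max (\<bar>a\<bar> ^ 3) (b ^ 2)"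
  have X: "0 \<le> X" by (simp add: X_def le_max_iff_disj)
  have root: "0 \<le> root 6 X" using X by (rule real_root_ge_zero)
  have root_le: "root 6 X \<le> r" using assms by (simp only: X_def)
  show r: "0 \<le> r" using root root_le by linarith
  have "X = root 6 X ^ 6" using X by simp
  also have "\<dots> \<le> r ^ 6" using root_le root by (rule power_mono)
  finally have "X \<le> r ^ 6" .
  then have a: "\<bar>a\<bar> ^ 3 \<le> (r ^ 2) ^ 3" and b: "\<bar>b\<bar> ^ 2 \<le> (r ^ 3) ^ 2"
    by (simp_all add: X_def flip: power_mult)
  show "\<bar>a\<bar> \<le> r ^ 2" by (rule power_mono_iff[THEN iffD1, OF _ _ _ a]) (simp_all add: r)
  show "\<bar>b\<bar> \<le> r ^ 3" by (rule power_mono_iff[THEN iffD1, OF _ _ _ b]) (simp_all add: r)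
qed

lemma scaled_coeffs_le_of_root_6_max_le:
  fixes A B x s :: int
  assumes s: "s > 0" and root: "root 6 (real_of_int (max (\<bar>A\<bar> ^ 3) (B ^ 2))) \<le> x / s"
  shows "0 \<le> x" and "\<bar>A * s ^ 2\<bar> \<le> x ^ 2" and "\<bar>B * s ^ 3\<bar> \<le> x ^ 3"
proof -
  define r where "r = real_of_int x / real_of_int s"
  have "root 6 (max (\<bar>real_of_int A\<bar> ^ 3) (real_of_int B ^ 2)) \<le> r"
    using root by (simp add: r_def of_int_max)
  note bounds = abs_le_power_of_root_6_max_le[OF this]
  have s': "real_of_int s > 0" using s by simp
  show "0 \<le> x" using bounds(1) s' by (simp add: r_def zero_le_divide_iff)
  have "real_of_int \<bar>A * s ^ 2\<bar> = \<bar>real_of_int A\<bar> * real_of_int s ^ 2" using s by (simp add: abs_mult)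
  also have "\<dots> \<le> r ^ 2 * real_of_int s ^ 2" using bounds(2) by (intro mult_right_mono) auto
  also have "\<dots> = real_of_int (x ^ 2)" using s' by (simp add: r_def power_divide)
  finally show "\<bar>A * s ^ 2\<bar> \<le> x ^ 2" by (simp only: of_int_le_iff)
  have "real_of_int \<bar>B * s ^ 3\<bar> = \<bar>real_of_int B\<bar> * real_of_int s ^ 3" using s by (simp add: abs_mult)
  also have "\<dots> \<le> r ^ 3 * real_of_int s ^ 3" using bounds(3) s' by (intro mult_right_mono) auto
  also have "\<dots> = real_of_int (x ^ 3)" using s' by (simp add: r_def power_divide)
  finally show "\<bar>B * s ^ 3\<bar> \<le> x ^ 3" by (simp only: of_int_le_iff)
qed

lemma cubic_abs_le:
  fixes x x1 A B s :: "'a::linordered_idom"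
  assumes x1: "0 \<le> x1" and x: "x1 \<le> x"
    and A: "\<bar>A * s ^ 2\<bar> \<le> x1 ^ 2" and B: "\<bar>B * s ^ 3\<bar> \<le> x1 ^ 3"
  shows "\<bar>x ^ 3 + A * x * s ^ 2 + B * s ^ 3\<bar> \<le> 3 * x ^ 3"
proof -
  have "0 \<le> x" using x1 x by (rule order.trans)
  have "x1 ^ 2 \<le> x ^ 2" and "x1 ^ 3 \<le> x ^ 3" using x1 x by (simp_all add: power_mono)
  have "\<bar>A * x * s ^ 2\<bar> = \<bar>A * s ^ 2\<bar> * x" using \<open>0 \<le> x\<close> by (simp add: abs_mult mult_ac)
  also have "\<dots> \<le> x ^ 2 * x"
    using A \<open>x1 ^ 2 \<le> x ^ 2\<close> \<open>0 \<le> x\<close> by (intro mult_right_mono) auto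
  also have "\<dots> = x ^ 3" by (simp add: power3_eq_cube power2_eq_square)
  finally have "\<bar>A * x * s ^ 2\<bar> \<le> x ^ 3" .
  moreover have "\<bar>x ^ 3\<bar> = x ^ 3" using \<open>0 \<le> x\<close> by simp
  ultimately show ?thesis
    using B \<open>x1 ^ 3 \<le> x ^ 3\<close> abs_triangle_ineq[of "x ^ 3 + A * x * s ^ 2" "B * s ^ 3"]
      abs_triangle_ineq[of "x ^ 3" "A * x * s ^ 2"]
    by linarith
qed

lemma chord_numerator_abs_le:
  fixes x1 x2 A B s M :: "'a::linordered_idom"
  assumes x1: "0 \<le> x1" and x12: "x1 \<le> x2"
    and A: "\<bar>A * s ^ 2\<bar> \<le> x1 ^ 2" and B: "\<bar>B * s ^ 3\<bar> \<le> x1 ^ 3"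
    and M: "M ^ 2 = (x1 ^ 3 + A * x1 * s ^ 2 + B * s ^ 3) * (x2 ^ 3 + A * x2 * s ^ 2 + B * s ^ 3)"
  shows "\<bar>(x1 + x2) * (x1 * x2 + A * s ^ 2) + 2 * B * s ^ 3 - 2 * M\<bar> \<le> 12 * x1 * x2 ^ 2"
proof -
  have x2: "0 \<le> x2" using x1 x12 by linarith
  have "M ^ 2 = \<bar>x1 ^ 3 + A * x1 * s ^ 2 + B * s ^ 3\<bar> * \<bar>x2 ^ 3 + A * x2 * s ^ 2 + B * s ^ 3\<bar>"
    unfolding abs_mult[symmetric] M[symmetric] by simp
  also have "\<dots> \<le> (3 * x1 ^ 3) * (3 * x2 ^ 3)"
    using cubic_abs_le[OF x1 order.refl A B] cubic_abs_le[OF x1 x12 A B] x1 x2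
    by (intro mult_mono) auto
  also have "\<dots> \<le> (3 * x1 * x2 ^ 2) ^ 2"
  proof -
    have "x1 ^ 2 * x2 ^ 3 * x1 \<le> x1 ^ 2 * x2 ^ 3 * x2" using x1 x2 x12 by (intro mult_left_mono) auto
    then show ?thesis by (simp add: power2_eq_square power3_eq_cube mult_ac)
  qed
  finally have "\<bar>M\<bar> \<le> 3 * x1 * x2 ^ 2"
    using x1 x2 abs_le_square_iff[of M "3 * x1 * x2 ^ 2"] by simp
  moreover have "\<bar>(x1 + x2) * (x1 * x2 + A * s ^ 2)\<bar> \<le> (2 * x2) * (2 * x1 * x2)"
  proof -
    have "x1 ^ 2 \<le> x1 * x2" using x1 x12 by (simp add: power2_eq_square mult_left_mono)
    then have "\<bar>x1 * x2 + A * s ^ 2\<bar> \<le> x1 * x2 + x1 * x2"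
      using abs_triangle_ineq[of "x1 * x2" "A * s ^ 2"] A x1 x2 by simp
    then show ?thesis unfolding abs_mult using x1 x2 x12 by (intro mult_mono) auto
  qed
  moreover have "\<bar>2 * B * s ^ 3\<bar> \<le> 2 * (x1 * x2 ^ 2)"
  proof -
    have "x1 * x1 ^ 2 \<le> x1 * x2 ^ 2" using x1 x12 by (intro mult_left_mono power_mono) auto
    then have "x1 ^ 3 \<le> x1 * x2 ^ 2" by (simp add: power3_eq_cube power2_eq_square)
    then show ?thesis using B by (simp add: abs_mult)
  qed
  moreover have "\<bar>2 * M\<bar> = 2 * \<bar>M\<bar>" by simp
  moreover note abs_triangle_ineq4[of "(x1 + x2) * (x1 * x2 + A * s ^ 2) + 2 * B * s ^ 3" "2 * M"]
    abs_triangle_ineq[of "(x1 + x2) * (x1 * x2 + A * s ^ 2)" "2 * B * s ^ 3"]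
  moreover have "(2 * x2) * (2 * x1 * x2) + 2 * (x1 * x2 ^ 2) + 2 * (3 * x1 * x2 ^ 2) = 12 * x1 * x2 ^ 2"
    by (simp add: algebra_simps power2_eq_square)
  ultimately show ?thesis by linarith
qed

lemma hgt_chord_le:
  fixes x1 x2 s N :: int
  assumes s: "s > 0" and x1: "0 \<le> x1" and x12: "x1 < x2" and N: "\<bar>N\<bar> \<le> 12 * x1 * x2 ^ 2"
  shows "hgt (of_int N / of_int (s * (x2 - x1) ^ 2))
           \<le> hgt (of_int x1 / of_int s) + 2 * hgt (of_int x2 / of_int s) + 3 * ln s + ln 12"
proof -
  define D where "D = s * (x2 - x1) ^ 2"
  define m1 m2 where "m1 = max \<bar>x1\<bar> s" and "m2 = max \<bar>x2\<bar> s"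
  have D: "D > 0" using s x12 by (simp add: D_def)
  have m: "0 < m1" "0 < m2" "x1 \<le> m1" "s \<le> m1" "x2 \<le> m2"
    using s by (auto simp: m1_def m2_def)
  have x2m2: "x2 ^ 2 \<le> m2 ^ 2" using m x1 x12 by (intro power_mono) auto
  have "x1 * x2 ^ 2 \<le> m1 * m2 ^ 2" using m x1 x2m2 by (intro mult_mono) auto
  then have "\<bar>N\<bar> \<le> 12 * m1 * m2 ^ 2" using N by (simp add: mult.assoc)
  moreover have "D \<le> 12 * m1 * m2 ^ 2"
  proof -
    have "(x2 - x1) ^ 2 \<le> x2 ^ 2" using x1 x12 by (intro power_mono) auto
    then have "D \<le> m1 * m2 ^ 2" unfolding D_def using m x2m2 s by (intro mult_mono) auto
    moreover have "0 \<le> m1 * m2 ^ 2" using m by simp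
    ultimately show ?thesis by (simp add: mult.assoc)
  qed
  ultimately have "real_of_int (max \<bar>N\<bar> D) \<le> real_of_int (12 * m1 * m2 ^ 2)"
    by (simp only: of_int_le_iff max.bounded_iff)
  then have "ln (max \<bar>N\<bar> D) \<le> ln (12 * m1 * m2 ^ 2)"
    using D by (intro ln_mono) auto
  also have "\<dots> = ln 12 + ln m1 + 2 * ln m2"
    using m by (simp add: ln_mult ln_realpow)
  finally have "ln (max \<bar>N\<bar> D) \<le> ln 12 + ln m1 + 2 * ln m2" .
  then show ?thesis
    using hgt_of_int_div_le[OF D, of N] ln_max_le_hgt_of_int_div[OF s, of x1]
      ln_max_le_hgt_of_int_div[OF s, of x2]
    unfolding D_def m1_def m2_def by linarith
qed

lemma ln_12_le: "ln (12::real) \<le> 2.9"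
proof -
  have "(12::real) \<le> 1.29 ^ 10" by (simp add: eval_nat_numeral)
  also have "\<dots> \<le> exp 0.29 ^ 10"
    using exp_ge_add_one_self[of "0.29::real"] by (intro power_mono) auto
  also have "\<dots> = exp 2.9" by (simp flip: exp_of_nat_mult)
  finally show ?thesis
    by (metis exp_gt_zero ln_exp ln_le_cancel_iff zero_less_numeral)
qed

theorem corollary3p4:
  fixes a :: wcoef and A B :: int and P Q :: point and x1 x2 s :: int
  assumes "global_minimal a"
    and "of_int A = - 27 * w_c4 a" and "of_int B = - 54 * w_c6 a"
    and "on_curve A B P" and "on_curve A B Q"
    and "P \<noteq> None" and "Q \<noteq> None"
    and "root 6 (real_of_int (max (\<bar>A\<bar>^3) (B^2))) \<le> real_of_rat (xcoord P)"
    and "xcoord P < xcoord Q"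
    and "s > 0"
    and "xcoord P = of_int x1 / of_int s" and "xcoord Q = of_int x2 / of_int s"
  shows "hpt (ec_add A B P Q) \<le> hpt P + 2 * hpt Q + 3 * ln (real_of_int s) + 2.9"
proof -
  obtain y1 where P: "P = Some (of_int x1 / of_int s, y1)"
    using assms(6,11) by (cases P) (auto simp: xcoord_def)
  obtain y2 where Q: "Q = Some (of_int x2 / of_int s, y2)"
    using assms(7,12) by (cases Q) (auto simp: xcoord_def)
  have x12: "x1 < x2" using assms(9,10) by (simp add: P Q xcoord_def divide_less_cancel)
  have "real_of_rat (xcoord P) = of_int x1 / of_int s" using assms(11) by (simp add: of_rat_divide)
  note coeffs = scaled_coeffs_le_of_root_6_max_le[OF \<open>s > 0\<close> assms(8)[unfolded this]]
  obtain M where M: "M ^ 2 = (x1 ^ 3 + A * x1 * s ^ 2 + B * s ^ 3) * (x2 ^ 3 + A * x2 * s ^ 2 + B * s ^ 3)"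
    and sum: "xcoord (ec_add A B P Q)
      = of_int ((x1 + x2) * (x1 * x2 + A * s ^ 2) + 2 * B * s ^ 3 - 2 * M) / of_int (s * (x2 - x1) ^ 2)"
    using xcoord_ec_add_of_int_div[of s x1 x2 A B y1 y2] assms(4,5,10) x12 unfolding P Q by auto
  have "hpt (ec_add A B P Q) \<le> hpt P + 2 * hpt Q + 3 * ln s + ln 12"
    using hgt_chord_le[OF \<open>s > 0\<close> coeffs(1) x12 chord_numerator_abs_le[OF coeffs(1) _ coeffs(2,3) M]] x12
    by (simp add: hpt_def sum assms(11,12))
  then show ?thesis using ln_12_le by linarith
qed

end
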